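(* Let $G=(V,E)$ be a rigid graph with $V=\{v_1,v_2,\ldots,v_n\}$ and $n\ge3$, let $(G,p)$ be a generic complex realisation of $G$, and let $S$ be the set of all complex realisations of $G$ equivalent to $(G,p)$. Then each congruence class in $S$ contains exactly four realisations $(G,q)$ with $q(v_1)=(0,0)$ and $q(v_2)=(0,z)$ for some $z\in\mathbb{C}$. Moreover, exactly two of these four realisations have $\operatorname{Arg}z\in(0,\pi]$.
   Context: A complex realisation of a finite graph $G=(V,E)$ is a map $p:V\to\mathbb{C}^2$. For $P=(x,y)\in\mathbb{C}^2$ put $d(P)=x^2+y^2$. Realisations $(G,p),(G,q)$ are equivalent if $d(p(u)-p(v))=d(q(u)-q(v))$ for all $uv\in E$, and congruent if this holds for all $u,v\in V$. A realisation is generic if the set of all coordinates of the points $p(v)$ is algebraically independent over $\mathbb{Q}$. The rigidity matrix $R(G,p)$ is the $|E|\times2|V|$ matrix whose row for edge $uv$ has $p(u)-p(v)$ in the columns of $u$, $p(v)-p(u)$ in the columns of $v$, zeros elsewhere; $G$ is rigid if $\operatorname{rank}R(G,p)=2|V|-3$ for a generic real realisation $p$. $\operatorname{Arg}$ denotes the principal argument, with values in $(-\pi,\pi]$. *)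

theory Defs
  imports "HOL-Analysis.Analysis"
begin

text \<open>A polynomial is given by its finitely supported coefficient function on exponent vectors.\<close>
definition alg_indep_Q :: "('i \<Rightarrow> 'a::field_char_0) \<Rightarrow> 'i set \<Rightarrow> bool" where
  "alg_indep_Q x I \<longleftrightarrow>
     (\<forall>c :: ('i \<Rightarrow> nat) \<Rightarrow> rat.
        finite {\<alpha>. c \<alpha> \<noteq> 0}
        \<and> (\<forall>\<alpha>. c \<alpha> \<noteq> 0 \<longrightarrow> (\<forall>i. i \<notin> I \<longrightarrow> \<alpha> i = 0))
        \<and> (\<Sum>\<alpha>\<in>{\<alpha>. c \<alpha> \<noteq> 0}. of_rat (c \<alpha>) * (\<Prod>i\<in>I. x i ^ \<alpha> i)) = 0
        \<longrightarrow> (\<forall>\<alpha>. c \<alpha> = 0))"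

definition coords :: "('v \<Rightarrow> 'a \<times> 'a) \<Rightarrow> 'v \<times> bool \<Rightarrow> 'a" where
  "coords p = (\<lambda>(v, b). if b then fst (p v) else snd (p v))"

definition generic :: "('v::finite \<Rightarrow> 'a::field_char_0 \<times> 'a) \<Rightarrow> bool" where
  "generic p \<longleftrightarrow> alg_indep_Q (coords p) UNIV"

definition dsq :: "'a::comm_ring_1 \<times> 'a \<Rightarrow> 'a \<times> 'a \<Rightarrow> 'a" where
  "dsq P Q = (fst P - fst Q)^2 + (snd P - snd Q)^2"

definition equivalent :: "('v \<times> 'v) set \<Rightarrow> ('v \<Rightarrow> complex \<times> complex) \<Rightarrow> ('v \<Rightarrow> complex \<times> complex) \<Rightarrow> bool" where
  "equivalent E p q \<longleftrightarrow> (\<forall>(u, v) \<in> E. dsq (p u) (p v) = dsq (q u) (q v))"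

definition congruent :: "('v \<Rightarrow> complex \<times> complex) \<Rightarrow> ('v \<Rightarrow> complex \<times> complex) \<Rightarrow> bool" where
  "congruent p q \<longleftrightarrow> (\<forall>u v. dsq (p u) (p v) = dsq (q u) (q v))"

text \<open>Columns are indexed by vertices,
  each vertex carrying a pair of columns (a vector in real x real).\<close>
definition rigidity_row :: "('v::finite \<Rightarrow> real \<times> real) \<Rightarrow> 'v \<Rightarrow> 'v \<Rightarrow> (real \<times> real) ^ 'v" where
  "rigidity_row p u v = (\<chi> w. if w = u then p u - p v else if w = v then p v - p u else 0)"

text \<open>rank R(G,p): the row rank, i.e. the dimension of the span of the rows
  (this is how the library defines the rank of a matrix, rank A = dim (rows A)).\<close>
definition rigidity_rank :: "('v::finite \<times> 'v) set \<Rightarrow> ('v \<Rightarrow> real \<times> real) \<Rightarrow> nat" where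
  "rigidity_rank E p = dim ((\<lambda>(u, v). rigidity_row p u v) ` E)"

definition rigid :: "('v::finite \<times> 'v) set \<Rightarrow> bool" where
  "rigid E \<longleftrightarrow> (\<exists>p :: 'v \<Rightarrow> real \<times> real. generic p \<and> rigidity_rank E p = 2 * CARD('v) - 3)"

end

theory Submission
  imports Defs "HOL-Library.Function_Algebras"
begin

text \<open>By rigidity, some \<open>2n - 3\<close> edges have linearly independent rows in the rigidity matrix at a
  generic real realisation.  Differentiating a rational relation among their squared lengths along
  all directions and inducting on the degree shows that these squared lengths are algebraically
  independent over \<open>\<rat>\<close>; by genericity the same holds at \<open>p\<close> and hence at every realisation
  \<open>q0\<close> equivalent to \<open>p\<close>.

  In isotropic coordinates \<open>u = x + i y\<close>, \<open>w = x - i y\<close> one has \<open>d(P - Q) = \<Delta>u \<Delta>w\<close>.  If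
  \<open>q0 v1\<close> and \<open>q0 v2\<close> shared a \<open>u\<close>- or \<open>w\<close>-coordinate, or if all points of \<open>q0\<close> were
  collinear, the \<open>2n - 3\<close> squared lengths would be polynomials in fewer than \<open>2n - 3\<close>
  quantities, hence algebraically dependent.  For such a nondegenerate \<open>q0\<close>, a congruent
  realisation is a translate of \<open>q0\<close> under a rotation \<open>(u, w) \<mapsto> (l u, w / l)\<close> or a reflection
  \<open>(u, w) \<mapsto> (l w, u / l)\<close>; putting \<open>v1\<close> at the origin and \<open>v2\<close> on the \<open>y\<close>-axis fixes \<open>l\<close>
  up to sign in each case.  The four realisations so obtained come in pairs \<open>q, -q\<close>, and
  exactly one member of each pair has \<open>Arg z \<in> (0, \<pi>]\<close>.\<close>

section \<open>Polynomial functions with rational coefficients\<close>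

lemma (in vector_space) dependent_family_if_card_gt:
  assumes A: "finite A" and T: "finite T" and fA: "f ` A \<subseteq> span T" and card: "card T < card A"
  obtains c where "\<exists>a\<in>A. c a \<noteq> 0" "(\<Sum>a\<in>A. scale (c a) (f a)) = 0"
proof (cases "inj_on f A")
  case False
  then obtain a b where ab: "a \<in> A" "b \<in> A" "a \<noteq> b" "f a = f b"
    unfolding inj_on_def by blast
  define c :: "_ \<Rightarrow> 'a" where "c = (\<lambda>x. if x = a then 1 else if x = b then -1 else 0)"
  have "(\<Sum>x\<in>A. scale (c x) (f x)) = (\<Sum>x\<in>{a, b}. scale (c x) (f x))"
    by (rule sum.mono_neutral_right) (use A ab in \<open>auto simp: c_def\<close>)
  also have "\<dots> = 0"
    using ab by (simp add: c_def)
  finally show ?thesis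
    using that[of c] ab(1) by (force simp: c_def)
next
  case True
  have "dependent (f ` A)"
  proof (rule ccontr)
    assume "\<not> dependent (f ` A)"
    then have "card (f ` A) \<le> card T"
      using independent_span_bound[OF T _ fA] by simp
    with card card_image[OF True] show False by simp
  qed
  moreover have "finite (f ` A)"
    using A by simp
  ultimately obtain u where u: "\<exists>v\<in>f ` A. u v \<noteq> 0" "(\<Sum>v\<in>f ` A. scale (u v) v) = 0"
    by (subst (asm) dependent_finite) auto
  show ?thesis
  proof (rule that[of "u \<circ> f"])
    show "\<exists>a\<in>A. (u \<circ> f) a \<noteq> 0" using u(1) by auto
    show "(\<Sum>a\<in>A. scale ((u \<circ> f) a) (f a)) = 0"
      using u(2) by (simp add: sum.reindex[OF True])
  qed
qed

definition rat_scale :: "rat \<Rightarrow> ('b \<Rightarrow> 'a::field_char_0) \<Rightarrow> 'b \<Rightarrow> 'a" where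
  "rat_scale r f = (\<lambda>z. of_rat r * f z)"

interpretation rat_fun: vector_space "rat_scale :: rat \<Rightarrow> ('b \<Rightarrow> 'a::field_char_0) \<Rightarrow> _"
  by unfold_locales (auto simp: rat_scale_def fun_eq_iff algebra_simps of_rat_add of_rat_mult)

lemma rat_scale_apply [simp]: "rat_scale r f z = of_rat r * f z"
  by (simp add: rat_scale_def)

lemma sum_fun_apply: "(\<Sum>x\<in>A. f x) z = (\<Sum>x\<in>A. f x z)"
  by (induction A rule: infinite_finite_induct) auto

lemma power_fun_apply: "((f :: 'b \<Rightarrow> 'a::comm_ring_1) ^ n) z = f z ^ n"
  by (induction n) auto

lemma rat_scale_mult_left: "rat_scale r f * g = rat_scale r (f * g)"
  by (simp add: fun_eq_iff mult.assoc)

lemma rat_scale_mult_right: "g * rat_scale r f = rat_scale r (g * f)"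
  by (simp add: fun_eq_iff mult.left_commute)

lemma rat_fun_span_mult:
  fixes f g :: "'b \<Rightarrow> 'a::field_char_0"
  assumes f: "f \<in> rat_fun.span A" and g: "g \<in> rat_fun.span B"
    and AB: "\<And>a b. a \<in> A \<Longrightarrow> b \<in> B \<Longrightarrow> a * b \<in> rat_fun.span C"
  shows "f * g \<in> rat_fun.span C"
proof -
  have "a * g \<in> rat_fun.span C" if a: "a \<in> A" for a
  proof -
    have "rat_fun.subspace {x. a * x \<in> rat_fun.span C}"
      unfolding rat_fun.subspace_def
      by (auto simp: distrib_left rat_fun.span_zero rat_fun.span_add rat_scale_mult_right
          rat_fun.span_scale)
    then show ?thesis
      using rat_fun.span_induct[OF g, of "\<lambda>x. a * x \<in> rat_fun.span C"] AB[OF a] by auto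
  qed
  moreover have "rat_fun.subspace {x. x * g \<in> rat_fun.span C}"
    unfolding rat_fun.subspace_def
    by (auto simp: distrib_right rat_fun.span_zero rat_fun.span_add rat_scale_mult_left
        rat_fun.span_scale)
  ultimately show ?thesis
    using rat_fun.span_induct[OF f, of "\<lambda>x. x * g \<in> rat_fun.span C"] by auto
qed

definition monomial :: "'i set \<Rightarrow> ('i \<Rightarrow> nat) \<Rightarrow> ('i \<Rightarrow> 'a::field_char_0) \<Rightarrow> 'a" where
  "monomial I \<beta> = (\<lambda>z. \<Prod>i\<in>I. z i ^ \<beta> i)"

definition poly_funs :: "'i set \<Rightarrow> nat \<Rightarrow> (('i \<Rightarrow> 'a::field_char_0) \<Rightarrow> 'a) set" where
  "poly_funs I D = rat_fun.span (monomial I ` {\<beta>. \<forall>i\<in>I. \<beta> i \<le> D})"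

lemma monomial_mult: "monomial I \<beta> * monomial I \<gamma> = monomial I (\<lambda>i. \<beta> i + \<gamma> i)"
  by (simp add: monomial_def fun_eq_iff power_add prod.distrib)

lemma inj_monomial: "inj (monomial (UNIV :: 'i::finite set) :: _ \<Rightarrow> ('i \<Rightarrow> 'a::field_char_0) \<Rightarrow> 'a)"
proof (rule injI, rule ext)
  fix \<beta> \<gamma> :: "'i \<Rightarrow> nat" and j
  assume eq: "(monomial UNIV \<beta> :: ('i \<Rightarrow> 'a) \<Rightarrow> 'a) = monomial UNIV \<gamma>"
  define z where "z = (\<lambda>i::'i. if i = j then (2::'a) else 1)"
  have z: "monomial UNIV \<delta> z = 2 ^ \<delta> j" for \<delta> :: "'i \<Rightarrow> nat"
  proof -
    have "monomial UNIV \<delta> z = (\<Prod>i\<in>UNIV. if i = j then (2::'a) ^ \<delta> i else 1)"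
      unfolding monomial_def z_def by (intro prod.cong) auto
    then show ?thesis by simp
  qed
  have "(of_nat (2 ^ \<beta> j) :: 'a) = of_nat (2 ^ \<gamma> j)"
    using z[of \<beta>] z[of \<gamma>] eq by simp
  then show "\<beta> j = \<gamma> j"
    by (simp only: of_nat_eq_iff) simp
qed

lemma poly_funs_mult: "f \<in> poly_funs I D1 \<Longrightarrow> g \<in> poly_funs I D2 \<Longrightarrow> f * g \<in> poly_funs I (D1 + D2)"
  unfolding poly_funs_def
  by (erule rat_fun_span_mult, assumption)
    (auto simp: monomial_mult intro!: rat_fun.span_base add_mono)

lemma poly_funs_mono: "D1 \<le> D2 \<Longrightarrow> poly_funs I D1 \<subseteq> poly_funs I D2"
  unfolding poly_funs_def by (intro rat_fun.span_mono image_mono) (auto intro: order_trans)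

lemma poly_funs_diff: "f \<in> poly_funs I D \<Longrightarrow> g \<in> poly_funs I D \<Longrightarrow> f - g \<in> poly_funs I D"
  unfolding poly_funs_def by (rule rat_fun.span_diff)

lemma poly_funs_const: "(\<lambda>z. of_rat r) \<in> poly_funs I D"
proof -
  have "monomial I (\<lambda>_. 0) \<in> poly_funs I D"
    unfolding poly_funs_def by (rule rat_fun.span_base) auto
  then have "rat_scale r (monomial I (\<lambda>_. 0)) \<in> poly_funs I D"
    unfolding poly_funs_def by (rule rat_fun.span_scale)
  then show ?thesis by (simp add: monomial_def rat_scale_def)
qed

lemma poly_funs_var:
  assumes "finite I" "i \<in> I"
  shows "(\<lambda>z :: 'i \<Rightarrow> 'a::field_char_0. z i) \<in> poly_funs I 1"
proof -
  have "(monomial I (\<lambda>j. if j = i then 1 else 0) :: ('i \<Rightarrow> 'a) \<Rightarrow> 'a) \<in> poly_funs I 1"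
    unfolding poly_funs_def by (rule rat_fun.span_base) auto
  moreover have "(monomial I (\<lambda>j. if j = i then 1 else 0) :: ('i \<Rightarrow> 'a) \<Rightarrow> 'a) = (\<lambda>z. z i)"
    using assms by (simp add: monomial_def fun_eq_iff if_distrib prod.delta cong: if_cong)
  ultimately show ?thesis by simp
qed

lemma poly_funs_power: "f \<in> poly_funs I d \<Longrightarrow> f ^ n \<in> poly_funs I (d * n)"
proof (induction n)
  case 0
  then show ?case using poly_funs_const[of 1 I] by (simp add: one_fun_def)
next
  case (Suc n)
  then have "f * f ^ n \<in> poly_funs I (d + d * n)" by (intro poly_funs_mult)
  then show ?case by (simp only: power_Suc mult_Suc_right)
qed

lemma poly_funs_prod_power:
  assumes "finite J" "\<And>j. j \<in> J \<Longrightarrow> g j \<in> poly_funs I d"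
  shows "(\<lambda>z. \<Prod>j\<in>J. g j z ^ \<alpha> j) \<in> poly_funs I (d * (\<Sum>j\<in>J. \<alpha> j))"
  using assms
proof (induction J rule: finite_induct)
  case empty
  then show ?case using poly_funs_const[of 1] by simp
next
  case (insert x F)
  have "g x ^ \<alpha> x * (\<lambda>z. \<Prod>j\<in>F. g j z ^ \<alpha> j) \<in> poly_funs I (d * \<alpha> x + d * (\<Sum>j\<in>F. \<alpha> j))"
    using insert by (intro poly_funs_mult[OF poly_funs_power]) auto
  moreover have "g x ^ \<alpha> x * (\<lambda>z. \<Prod>j\<in>F. g j z ^ \<alpha> j) = (\<lambda>z. \<Prod>j\<in>insert x F. g j z ^ \<alpha> j)"
    using insert by (simp add: fun_eq_iff power_fun_apply)
  ultimately show ?case using insert by (simp add: distrib_left)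
qed

lemma card_monomials_le:
  fixes D :: nat
  assumes "finite I"
  defines "M \<equiv> monomial I ` {\<beta>. \<forall>i\<in>I. \<beta> i \<le> D} :: (('i \<Rightarrow> 'a::field_char_0) \<Rightarrow> 'a) set"
  shows "finite M" "card M \<le> (D + 1) ^ card I"
proof -
  have M: "M = monomial I ` PiE I (\<lambda>_. {..D})"
  proof (intro equalityI subsetI)
    fix m assume "m \<in> M"
    then obtain \<beta> where \<beta>: "\<forall>i\<in>I. \<beta> i \<le> D" "m = monomial I \<beta>"
      by (auto simp: M_def)
    then have "m = monomial I (restrict \<beta> I)" "restrict \<beta> I \<in> PiE I (\<lambda>_. {..D})"
      by (auto simp: monomial_def)
    then show "m \<in> monomial I ` PiE I (\<lambda>_. {..D})" by blast
  qed (auto simp: M_def PiE_def Pi_def)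
  have fin: "finite (PiE I (\<lambda>_. {..D}))"
    using assms by (simp add: finite_PiE)
  then show "finite M"
    unfolding M by simp
  have "card M \<le> card (PiE I (\<lambda>_. {..D}))"
    unfolding M by (rule card_image_le[OF fin])
  also have "\<dots> = (D + 1) ^ card I"
    using assms by (simp add: card_PiE)
  finally show "card M \<le> (D + 1) ^ card I" .
qed

lemma poly_funs_add: "f \<in> poly_funs I D \<Longrightarrow> g \<in> poly_funs I D \<Longrightarrow> f + g \<in> poly_funs I D"
  unfolding poly_funs_def by (rule rat_fun.span_add)

lemma poly_funs_sq_diff:
  assumes "finite I" "a \<in> I" "b \<in> I"
  shows "(\<lambda>z :: 'i \<Rightarrow> 'a::field_char_0. (z a - z b)^2) \<in> poly_funs I 2"
proof -
  have d: "(\<lambda>z :: 'i \<Rightarrow> 'a. z a) - (\<lambda>z. z b) \<in> poly_funs I 1"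
    using assms by (intro poly_funs_diff poly_funs_var)
  have "((\<lambda>z :: 'i \<Rightarrow> 'a. z a) - (\<lambda>z. z b)) * ((\<lambda>z. z a) - (\<lambda>z. z b)) \<in> poly_funs I (1 + 1)"
    by (rule poly_funs_mult[OF d d])
  moreover have "((\<lambda>z :: 'i \<Rightarrow> 'a. z a) - (\<lambda>z. z b)) * ((\<lambda>z. z a) - (\<lambda>z. z b)) = (\<lambda>z. (z a - z b)^2)"
    by (simp add: fun_eq_iff power2_eq_square)
  ultimately show ?thesis
    by (simp only: one_add_one)
qed

definition rat_poly :: "'j set \<Rightarrow> ('j \<Rightarrow> nat) set \<Rightarrow> (('j \<Rightarrow> nat) \<Rightarrow> rat) \<Rightarrow> ('j \<Rightarrow> 'a::field_char_0) \<Rightarrow> 'a" where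
  "rat_poly J A c y = (\<Sum>\<alpha>\<in>A. of_rat (c \<alpha>) * monomial J \<alpha> y)"

lemma exponent_count_ineq:
  fixes d k m :: nat
  assumes "m < k"
  shows "(d * k * (d * k + 1) ^ m + 1) ^ m < ((d * k + 1) ^ m + 1) ^ k"
proof -
  define M where "M = (d * k + 1) ^ m"
  have "(d * k * M + 1) ^ m \<le> ((d * k + 1) * (M + 1)) ^ m"
    by (rule power_mono) (simp_all add: algebra_simps)
  also have "\<dots> = M * (M + 1) ^ m"
    by (simp only: power_mult_distrib M_def)
  also have "\<dots> < (M + 1) ^ Suc m"
    by simp
  also have "\<dots> \<le> (M + 1) ^ k"
    by (rule power_increasing) (use assms in auto)
  finally show ?thesis by (simp add: M_def)
qed

lemma card_bounded_exponents:
  fixes M :: nat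
  assumes "finite J"
  defines "A \<equiv> {\<alpha> :: 'j \<Rightarrow> nat. (\<forall>j\<in>J. \<alpha> j \<le> M) \<and> (\<forall>j. j \<notin> J \<longrightarrow> \<alpha> j = 0)}"
  shows "finite A" "card A = (M + 1) ^ card J"
proof -
  define ext where "ext = (\<lambda>(f :: 'j \<Rightarrow> nat) j. if j \<in> J then f j else 0)"
  have inj: "inj_on ext (PiE J (\<lambda>_. {..M}))"
  proof (rule inj_onI, rule ext)
    fix f f' j assume f: "f \<in> PiE J (\<lambda>_. {..M})" "f' \<in> PiE J (\<lambda>_. {..M})" "ext f = ext f'"
    then have "ext f j = ext f' j" by simp
    with f(1,2) show "f j = f' j"
      by (cases "j \<in> J") (auto simp: ext_def PiE_def extensional_def)
  qed
  have "A = ext ` PiE J (\<lambda>_. {..M})"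
  proof (intro equalityI subsetI)
    fix \<alpha> assume "\<alpha> \<in> A"
    then have "\<alpha> = ext (restrict \<alpha> J)" "restrict \<alpha> J \<in> PiE J (\<lambda>_. {..M})"
      by (auto simp: A_def ext_def fun_eq_iff)
    then show "\<alpha> \<in> ext ` PiE J (\<lambda>_. {..M})" by blast
  qed (auto simp: A_def ext_def PiE_def Pi_def)
  then show "finite A" "card A = (M + 1) ^ card J"
    using assms inj by (simp_all add: finite_PiE card_image card_PiE)
qed

text \<open>More polynomials than variables are algebraically dependent: the monomials of degree at
  most \<open>M\<close> in each of the \<open>k\<close> given polynomials outnumber the monomials of the resulting degree
  in the \<open>m < k\<close> variables.\<close>

lemma poly_funs_alg_dependent:
  fixes g :: "'j \<Rightarrow> ('i \<Rightarrow> 'a::field_char_0) \<Rightarrow> 'a"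
  assumes I: "finite I" and J: "finite J" and IJ: "card I < card J"
    and g: "\<And>j. j \<in> J \<Longrightarrow> g j \<in> poly_funs I d"
  obtains A c where "finite A" "\<forall>\<alpha>\<in>A. \<forall>j. j \<notin> J \<longrightarrow> \<alpha> j = 0" "\<exists>\<alpha>\<in>A. c \<alpha> \<noteq> 0"
    "\<And>z. rat_poly J A c (\<lambda>j. g j z) = 0"
proof -
  define k where "k = card J"
  define m where "m = card I"
  define M where "M = (d * k + 1) ^ m"
  define A where "A = {\<alpha> :: 'j \<Rightarrow> nat. (\<forall>j\<in>J. \<alpha> j \<le> M) \<and> (\<forall>j. j \<notin> J \<longrightarrow> \<alpha> j = 0)}"
  have finA: "finite A" and cardA: "card A = (M + 1) ^ k"
    unfolding A_def k_def by (rule card_bounded_exponents[OF J])+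
  have A: "\<forall>\<alpha>\<in>A. (\<forall>j\<in>J. \<alpha> j \<le> M) \<and> (\<forall>j. j \<notin> J \<longrightarrow> \<alpha> j = 0)"
    by (simp add: A_def)
  define G where "G = (\<lambda>\<alpha> z. monomial J \<alpha> (\<lambda>j. g j z))"
  define T where "T = (monomial I ` {\<beta>. \<forall>i\<in>I. \<beta> i \<le> d * (k * M)} :: (('i \<Rightarrow> 'a) \<Rightarrow> 'a) set)"
  have GT: "G ` A \<subseteq> rat_fun.span T"
  proof
    fix x assume "x \<in> G ` A"
    then obtain \<alpha> where \<alpha>: "\<alpha> \<in> A" "x = G \<alpha>" by auto
    have "G \<alpha> \<in> poly_funs I (d * (\<Sum>j\<in>J. \<alpha> j))"
      unfolding G_def monomial_def using J g by (rule poly_funs_prod_power)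
    moreover have "(\<Sum>j\<in>J. \<alpha> j) \<le> k * M"
      using sum_bounded_above[of J \<alpha> M] A \<alpha>(1) by (auto simp: k_def)
    ultimately have "G \<alpha> \<in> poly_funs I (d * (k * M))"
      using poly_funs_mono[of "d * (\<Sum>j\<in>J. \<alpha> j)" "d * (k * M)" I] by auto
    then show "x \<in> rat_fun.span T"
      using \<alpha> by (simp add: poly_funs_def T_def)
  qed
  have finT: "finite T" and "card T \<le> (d * (k * M) + 1) ^ m"
    unfolding T_def m_def by (rule card_monomials_le[OF I])+
  moreover have "(d * k * M + 1) ^ m < (M + 1) ^ k"
    using exponent_count_ineq IJ by (simp add: M_def m_def k_def)
  ultimately have "card T < card A"
    using cardA by (simp add: mult.assoc)
  then obtain c where c: "\<exists>\<alpha>\<in>A. c \<alpha> \<noteq> 0" "(\<Sum>\<alpha>\<in>A. rat_scale (c \<alpha>) (G \<alpha>)) = 0"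
    by (rule rat_fun.dependent_family_if_card_gt[OF finA finT GT])
  show ?thesis
  proof (rule that[OF finA _ c(1)])
    show "\<forall>\<alpha>\<in>A. \<forall>j. j \<notin> J \<longrightarrow> \<alpha> j = 0"
      using A by blast
    show "rat_poly J A c (\<lambda>j. g j z) = 0" for z
      using fun_cong[OF c(2), of z] by (simp add: rat_poly_def sum_fun_apply G_def)
  qed
qed

lemma alg_indep_poly_fun_eq_zero:
  fixes z0 :: "'i::finite \<Rightarrow> 'a::field_char_0"
  assumes indep: "alg_indep_Q z0 UNIV" and F: "F \<in> rat_fun.span (range (monomial UNIV))"
    and F0: "F z0 = 0"
  shows "F z = 0"
proof -
  obtain t r where t: "finite t" "t \<subseteq> range (monomial UNIV)" "F = (\<Sum>a\<in>t. rat_scale (r a) a)"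
    using F unfolding rat_fun.span_explicit by blast
  define B where "B = {\<beta>. monomial UNIV \<beta> \<in> t}"
  have bij: "bij_betw (monomial UNIV) B t"
    unfolding bij_betw_def B_def using t(2) inj_on_subset[OF inj_monomial] by auto
  have finB: "finite B"
    using bij t(1) bij_betw_finite by blast
  define c where "c = (\<lambda>\<beta>. if \<beta> \<in> B then r (monomial UNIV \<beta>) else 0)"
  have supp: "{\<beta>. c \<beta> \<noteq> 0} \<subseteq> B"
    by (auto simp: c_def split: if_splits)
  have Fz: "F z = (\<Sum>\<beta>\<in>B. of_rat (c \<beta>) * (\<Prod>i\<in>UNIV. z i ^ \<beta> i))" for z
  proof -
    have "F z = (\<Sum>a\<in>t. of_rat (r a) * a z)"
      by (simp add: t(3) sum_fun_apply)
    also have "\<dots> = (\<Sum>\<beta>\<in>B. of_rat (r (monomial UNIV \<beta>)) * monomial UNIV \<beta> z)"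
      by (rule sum.reindex_bij_betw[OF bij, symmetric])
    also have "\<dots> = (\<Sum>\<beta>\<in>B. of_rat (c \<beta>) * (\<Prod>i\<in>UNIV. z i ^ \<beta> i))"
      by (intro sum.cong) (auto simp: c_def monomial_def)
    finally show ?thesis .
  qed
  have "(\<Sum>\<beta>\<in>{\<beta>. c \<beta> \<noteq> 0}. of_rat (c \<beta>) * (\<Prod>i\<in>UNIV. z0 i ^ \<beta> i)) =
        (\<Sum>\<beta>\<in>B. of_rat (c \<beta>) * (\<Prod>i\<in>UNIV. z0 i ^ \<beta> i))"
    by (rule sum.mono_neutral_left[OF finB supp]) auto
  also have "\<dots> = 0"
    using Fz[of z0] F0 by simp
  finally have "\<forall>\<alpha>. c \<alpha> = 0"
    using indep finite_subset[OF supp finB] unfolding alg_indep_Q_def by blast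
  then show ?thesis
    using Fz[of z] by simp
qed

section \<open>Algebraic independence of squared edge lengths\<close>

definition sq_length :: "('v \<Rightarrow> 'a::comm_ring_1 \<times> 'a) \<Rightarrow> 'v \<times> 'v \<Rightarrow> 'a" where
  "sq_length p e = dsq (p (fst e)) (p (snd e))"

text \<open>Exponent vectors are required to vanish outside \<open>J\<close>, so that distinct elements of the
  support \<open>A\<close> give distinct monomials.\<close>

definition alg_indep_lengths :: "('v \<times> 'v) set \<Rightarrow> ('v \<Rightarrow> 'a::field_char_0 \<times> 'a) \<Rightarrow> bool" where
  "alg_indep_lengths J p \<longleftrightarrow>
     (\<forall>A c. finite A \<longrightarrow> (\<forall>\<alpha>\<in>A. \<forall>j. j \<notin> J \<longrightarrow> \<alpha> j = 0) \<longrightarrow>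
        rat_poly J A c (sq_length p) = 0 \<longrightarrow> (\<forall>\<alpha>\<in>A. c \<alpha> = 0))"

lemma rat_poly_cong: "(\<And>j. j \<in> J \<Longrightarrow> y j = y' j) \<Longrightarrow> rat_poly J A c y = rat_poly J A c y'"
  by (simp add: rat_poly_def monomial_def)

lemma alg_indep_lengths_cong:
  assumes "alg_indep_lengths J p" and "\<And>e. e \<in> J \<Longrightarrow> sq_length q e = sq_length p e"
  shows "alg_indep_lengths J q"
  using assms rat_poly_cong[of J "sq_length q" "sq_length p"] unfolding alg_indep_lengths_def
  by metis

lemma poly_funs_sq_length:
  "(\<lambda>z :: 'v::finite \<times> bool \<Rightarrow> 'a::field_char_0. sq_length (\<lambda>v. (z (v, True), z (v, False))) e)
     \<in> poly_funs UNIV 2"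
proof -
  have "(\<lambda>z :: 'v \<times> bool \<Rightarrow> 'a. (z (fst e, True) - z (snd e, True))^2)
      + (\<lambda>z. (z (fst e, False) - z (snd e, False))^2) \<in> poly_funs UNIV 2"
    by (intro poly_funs_add poly_funs_sq_diff) simp_all
  then show ?thesis
    by (simp add: sq_length_def dsq_def plus_fun_def)
qed

lemma rat_poly_sq_length_poly_fun:
  "(\<lambda>z :: 'v::finite \<times> bool \<Rightarrow> 'a::field_char_0.
      rat_poly J A c (sq_length (\<lambda>v. (z (v, True), z (v, False)))))
     \<in> rat_fun.span (range (monomial UNIV))"
proof -
  let ?m = "\<lambda>\<alpha> (z :: 'v \<times> bool \<Rightarrow> 'a). monomial J \<alpha> (sq_length (\<lambda>v. (z (v, True), z (v, False))))"
  have "?m \<alpha> \<in> poly_funs UNIV (2 * (\<Sum>j\<in>J. \<alpha> j))" for \<alpha>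
    unfolding monomial_def by (rule poly_funs_prod_power) (simp_all add: poly_funs_sq_length)
  then have "?m \<alpha> \<in> rat_fun.span (range (monomial UNIV))" for \<alpha>
    unfolding poly_funs_def by (rule set_mp[OF rat_fun.span_mono, rotated]) auto
  then have "(\<Sum>\<alpha>\<in>A. rat_scale (c \<alpha>) (?m \<alpha>)) \<in> rat_fun.span (range (monomial UNIV))"
    by (intro rat_fun.span_sum rat_fun.span_scale)
  moreover have "(\<Sum>\<alpha>\<in>A. rat_scale (c \<alpha>) (?m \<alpha>))
      = (\<lambda>z. rat_poly J A c (sq_length (\<lambda>v. (z (v, True), z (v, False)))))"
    by (simp add: fun_eq_iff sum_fun_apply rat_poly_def)
  ultimately show ?thesis by simp
qed

text \<open>The relation is a polynomial identity with rational coefficients in the coordinates, and the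
  coordinates of a generic realisation satisfy no nontrivial such identity.\<close>

lemma generic_rat_poly_sq_length:
  fixes p q :: "'v::finite \<Rightarrow> 'a::field_char_0 \<times> 'a"
  assumes "generic p" and "rat_poly J A c (sq_length p) = 0"
  shows "rat_poly J A c (sq_length q) = 0"
proof -
  have pts: "(\<lambda>v. (coords r (v, True), coords r (v, False))) = r" for r :: "'v \<Rightarrow> 'a \<times> 'a"
    by (simp add: coords_def)
  show ?thesis
    using alg_indep_poly_fun_eq_zero[OF assms(1)[unfolded generic_def] rat_poly_sq_length_poly_fun,
        of J A c "coords q"] assms(2)
    by (simp add: pts)
qed

text \<open>\<open>(pderiv_supp e A, pderiv_coeff e c)\<close> represents the formal partial derivative of the
  polynomial \<open>(A, c)\<close> with respect to the variable \<open>e\<close>.\<close>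

definition pderiv_supp :: "'j \<Rightarrow> ('j \<Rightarrow> nat) set \<Rightarrow> ('j \<Rightarrow> nat) set" where
  "pderiv_supp e A = (\<lambda>\<alpha>. \<alpha>(e := \<alpha> e - 1)) ` {\<alpha>\<in>A. \<alpha> e \<noteq> 0}"

definition pderiv_coeff :: "'j \<Rightarrow> (('j \<Rightarrow> nat) \<Rightarrow> rat) \<Rightarrow> ('j \<Rightarrow> nat) \<Rightarrow> rat" where
  "pderiv_coeff e c = (\<lambda>\<beta>. of_nat (\<beta> e + 1) * c (\<beta>(e := \<beta> e + 1)))"

lemma rat_poly_pderiv:
  fixes y :: "'j \<Rightarrow> 'a::field_char_0"
  assumes "finite J" "e \<in> J" "finite A"
  shows "(\<Sum>\<alpha>\<in>A. of_rat (c \<alpha>) * (of_nat (\<alpha> e) * y e ^ (\<alpha> e - 1) * (\<Prod>j\<in>J-{e}. y j ^ \<alpha> j)))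
       = rat_poly J (pderiv_supp e A) (pderiv_coeff e c) y"
proof -
  define f where "f = (\<lambda>\<alpha> :: 'j \<Rightarrow> nat. \<alpha>(e := \<alpha> e - 1))"
  define B where "B = {\<alpha>\<in>A. \<alpha> e \<noteq> 0}"
  have inj: "inj_on f B"
  proof (rule inj_onI, rule ext)
    fix \<alpha> \<beta> j assume ab: "\<alpha> \<in> B" "\<beta> \<in> B" "f \<alpha> = f \<beta>"
    then have "f \<alpha> j = f \<beta> j" by simp
    with ab(1,2) show "\<alpha> j = \<beta> j"
      by (cases "j = e") (auto simp: f_def B_def)
  qed
  have "(\<Sum>\<alpha>\<in>A. of_rat (c \<alpha>) * (of_nat (\<alpha> e) * y e ^ (\<alpha> e - 1) * (\<Prod>j\<in>J-{e}. y j ^ \<alpha> j)))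
      = (\<Sum>\<alpha>\<in>B. of_rat (c \<alpha>) * (of_nat (\<alpha> e) * y e ^ (\<alpha> e - 1) * (\<Prod>j\<in>J-{e}. y j ^ \<alpha> j)))"
    by (rule sum.mono_neutral_right) (use assms in \<open>auto simp: B_def\<close>)
  also have "\<dots> = (\<Sum>\<alpha>\<in>B. of_rat (pderiv_coeff e c (f \<alpha>)) * monomial J (f \<alpha>) y)"
  proof (rule sum.cong[OF refl])
    fix \<alpha> assume "\<alpha> \<in> B"
    then have ae: "\<alpha> e \<noteq> 0" by (simp add: B_def)
    then have "pderiv_coeff e c (f \<alpha>) = of_nat (\<alpha> e) * c \<alpha>"
      by (simp add: pderiv_coeff_def f_def fun_upd_idem)
    moreover have "monomial J (f \<alpha>) y = y e ^ (\<alpha> e - 1) * (\<Prod>j\<in>J-{e}. y j ^ \<alpha> j)"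
      using assms by (simp add: monomial_def prod.remove[of J e] f_def)
    ultimately show "of_rat (c \<alpha>) * (of_nat (\<alpha> e) * y e ^ (\<alpha> e - 1) * (\<Prod>j\<in>J-{e}. y j ^ \<alpha> j))
        = of_rat (pderiv_coeff e c (f \<alpha>)) * monomial J (f \<alpha>) y"
      by (simp add: of_rat_mult)
  qed
  also have "\<dots> = rat_poly J (pderiv_supp e A) (pderiv_coeff e c) y"
    unfolding rat_poly_def pderiv_supp_def f_def[symmetric] B_def[symmetric]
    by (rule sum.reindex[OF inj, symmetric, unfolded comp_def])
  finally show ?thesis .
qed

lemma DERIV_prod_power:
  fixes y :: "'j \<Rightarrow> real \<Rightarrow> real"
  assumes "\<And>j. j \<in> J \<Longrightarrow> (y j has_real_derivative y' j) (at t0)"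
  shows "((\<lambda>t. \<Prod>j\<in>J. y j t ^ \<alpha> j) has_real_derivative
     (\<Sum>e\<in>J. y' e * (of_nat (\<alpha> e) * y e t0 ^ (\<alpha> e - 1) * (\<Prod>j\<in>J-{e}. y j t0 ^ \<alpha> j)))) (at t0)"
proof -
  have d: "((\<lambda>t. y j t ^ \<alpha> j) has_derivative
      (\<lambda>h. h * (of_nat (\<alpha> j) * (y' j * y j t0 ^ (\<alpha> j - 1))))) (at t0)" if "j \<in> J" for j
    using DERIV_power[OF assms[OF that], of "\<alpha> j"] unfolding has_field_derivative_def
    by (rule has_derivative_eq_rhs) (auto simp: fun_eq_iff mult.commute)
  have "((\<lambda>t. \<Prod>j\<in>J. y j t ^ \<alpha> j) has_derivative
     (\<lambda>h. \<Sum>i\<in>J. h * (of_nat (\<alpha> i) * (y' i * y i t0 ^ (\<alpha> i - 1))) * (\<Prod>j\<in>J - {i}. y j t0 ^ \<alpha> j))) (at t0)"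
    by (rule has_derivative_prod) (rule d)
  then show ?thesis
    unfolding has_field_derivative_def
    by (rule has_derivative_eq_rhs) (simp add: fun_eq_iff sum_distrib_left algebra_simps)
qed

lemma DERIV_rat_poly:
  fixes y :: "'j \<Rightarrow> real \<Rightarrow> real"
  assumes "\<And>j. j \<in> J \<Longrightarrow> (y j has_real_derivative y' j) (at t0)"
  shows "((\<lambda>t. rat_poly J A c (\<lambda>j. y j t)) has_real_derivative
     (\<Sum>\<alpha>\<in>A. of_rat (c \<alpha>) *
        (\<Sum>e\<in>J. y' e * (of_nat (\<alpha> e) * y e t0 ^ (\<alpha> e - 1) * (\<Prod>j\<in>J-{e}. y j t0 ^ \<alpha> j))))) (at t0)"
  unfolding rat_poly_def monomial_def
  by (intro DERIV_sum DERIV_cmult DERIV_prod_power assms)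

lemma DERIV_sq_length_line:
  fixes x h :: "'v \<Rightarrow> real \<times> real"
  shows "((\<lambda>t. sq_length (\<lambda>w. x w + t *\<^sub>R h w) e) has_real_derivative
           2 * ((x (fst e) - x (snd e)) \<bullet> (h (fst e) - h (snd e)))) (at 0)"
  unfolding sq_length_def dsq_def
  by (auto intro!: derivative_eq_intros simp: inner_prod_def algebra_simps)

text \<open>The chain rule for the derivative at \<open>x0\<close> in direction \<open>h\<close> of an identity
  \<open>P(sq_length x) = 0\<close> that holds for all real realisations \<open>x\<close>.\<close>

lemma rat_poly_sq_length_pderivs:
  fixes x0 h :: "'v \<Rightarrow> real \<times> real"
  assumes all: "\<And>x :: 'v \<Rightarrow> real \<times> real. rat_poly J A c (sq_length x) = 0"
    and J: "finite J" and A: "finite A"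
  shows "(\<Sum>e\<in>J. ((x0 (fst e) - x0 (snd e)) \<bullet> (h (fst e) - h (snd e)))
             * rat_poly J (pderiv_supp e A) (pderiv_coeff e c) (sq_length x0)) = 0"
proof -
  define y where "y = (\<lambda>e t. sq_length (\<lambda>w. x0 w + t *\<^sub>R h w) e)"
  define y' where "y' = (\<lambda>e. 2 * ((x0 (fst e) - x0 (snd e)) \<bullet> (h (fst e) - h (snd e))))"
  have "((\<lambda>t. rat_poly J A c (\<lambda>j. y j t)) has_real_derivative
     (\<Sum>\<alpha>\<in>A. of_rat (c \<alpha>) *
        (\<Sum>e\<in>J. y' e * (of_nat (\<alpha> e) * y e 0 ^ (\<alpha> e - 1) * (\<Prod>j\<in>J-{e}. y j 0 ^ \<alpha> j))))) (at 0)"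
    unfolding y_def y'_def by (intro DERIV_rat_poly DERIV_sq_length_line)
  moreover have "((\<lambda>t. rat_poly J A c (\<lambda>j. y j t)) has_real_derivative 0) (at 0)"
    by (simp add: y_def all)
  ultimately have "(\<Sum>\<alpha>\<in>A. of_rat (c \<alpha>) *
        (\<Sum>e\<in>J. y' e * (of_nat (\<alpha> e) * y e 0 ^ (\<alpha> e - 1) * (\<Prod>j\<in>J-{e}. y j 0 ^ \<alpha> j)))) = 0"
    by (rule DERIV_unique)
  also have "(\<Sum>\<alpha>\<in>A. of_rat (c \<alpha>) *
        (\<Sum>e\<in>J. y' e * (of_nat (\<alpha> e) * y e 0 ^ (\<alpha> e - 1) * (\<Prod>j\<in>J-{e}. y j 0 ^ \<alpha> j))))
     = (\<Sum>e\<in>J. y' e * (\<Sum>\<alpha>\<in>A. of_rat (c \<alpha>) *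
        (of_nat (\<alpha> e) * y e 0 ^ (\<alpha> e - 1) * (\<Prod>j\<in>J-{e}. y j 0 ^ \<alpha> j))))"
    by (simp add: sum_distrib_left sum.swap[of _ A] algebra_simps)
  also have "\<dots> = (\<Sum>e\<in>J. y' e * rat_poly J (pderiv_supp e A) (pderiv_coeff e c) (sq_length x0))"
  proof (intro sum.cong refl arg_cong[where f = "(*) _"])
    fix e assume "e \<in> J"
    have "y j 0 = sq_length x0 j" for j
      by (simp add: y_def)
    then show "(\<Sum>\<alpha>\<in>A. of_rat (c \<alpha>) *
        (of_nat (\<alpha> e) * y e 0 ^ (\<alpha> e - 1) * (\<Prod>j\<in>J-{e}. y j 0 ^ \<alpha> j)))
      = rat_poly J (pderiv_supp e A) (pderiv_coeff e c) (sq_length x0)"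
      using rat_poly_pderiv[OF J \<open>e \<in> J\<close> A, of c "sq_length x0"] by simp
  qed
  finally show ?thesis
    by (simp add: y'_def sum_distrib_left[symmetric] mult.assoc)
qed

lemma independent_inner_sum_eq_zero:
  fixes row :: "'j \<Rightarrow> 'b::real_inner"
  assumes J: "finite J" and ind: "independent (row ` J)" and inj: "inj_on row J"
    and orth: "\<And>r. (\<Sum>e\<in>J. (row e \<bullet> r) * a e) = 0" and e: "e \<in> J"
  shows "a e = 0"
proof -
  define r where "r = (\<Sum>e\<in>J. a e *\<^sub>R row e)"
  have "r \<bullet> r = 0"
    using orth[of r] by (simp add: r_def inner_sum_left mult.commute)
  then have "(\<Sum>v\<in>row ` J. a (inv_into J row v) *\<^sub>R v) = 0"
    using inj by (simp add: r_def sum.reindex)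
  then have "\<forall>v\<in>row ` J. a (inv_into J row v) = 0"
    using ind J real_vector.dependent_finite[of "row ` J"] by auto
  then show ?thesis
    using e inj by auto
qed

lemma rigidity_row_inner:
  fixes x :: "'v::finite \<Rightarrow> real \<times> real"
  assumes "u \<noteq> v"
  shows "rigidity_row x u v \<bullet> r = (x u - x v) \<bullet> (r $ u - r $ v)"
proof -
  have "rigidity_row x u v \<bullet> r
      = (\<Sum>w\<in>UNIV. (if w = u then (x u - x v) \<bullet> r $ u else 0)
                  + (if w = v then (x v - x u) \<bullet> r $ v else 0))"
    unfolding inner_vec_def rigidity_row_def using assms by (intro sum.cong) auto
  also have "\<dots> = (x u - x v) \<bullet> (r $ u - r $ v)"
    by (simp add: sum.distrib inner_diff_left inner_diff_right)
  finally show ?thesis .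
qed

lemma generic_rat_poly_pderiv_eq_zero:
  fixes x0 :: "'v::finite \<Rightarrow> real \<times> real"
  assumes gen: "generic x0" and loop: "\<forall>e\<in>J. fst e \<noteq> snd e"
    and ind: "independent ((\<lambda>e. rigidity_row x0 (fst e) (snd e)) ` J)"
    and inj: "inj_on (\<lambda>e. rigidity_row x0 (fst e) (snd e)) J"
    and A: "finite A" and P: "rat_poly J A c (sq_length x0) = 0" and e: "e \<in> J"
  shows "rat_poly J (pderiv_supp e A) (pderiv_coeff e c) (sq_length x0) = 0"
proof (rule independent_inner_sum_eq_zero[OF _ ind inj _ e])
  fix r :: "(real \<times> real) ^ 'v"
  have "rat_poly J A c (sq_length x) = 0" for x :: "'v \<Rightarrow> real \<times> real"
    using generic_rat_poly_sq_length[OF gen P] .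
  then have "(\<Sum>e\<in>J. ((x0 (fst e) - x0 (snd e)) \<bullet> (r $ fst e - r $ snd e))
      * rat_poly J (pderiv_supp e A) (pderiv_coeff e c) (sq_length x0)) = 0"
    by (rule rat_poly_sq_length_pderivs) (simp_all add: A)
  then show "(\<Sum>e\<in>J. (rigidity_row x0 (fst e) (snd e) \<bullet> r)
      * rat_poly J (pderiv_supp e A) (pderiv_coeff e c) (sq_length x0)) = 0"
    using loop by (simp add: rigidity_row_inner)
qed simp

lemma pderiv_supp_degree:
  assumes "\<beta> \<in> pderiv_supp e A" "e \<in> J" "finite J"
    and "\<forall>\<alpha>\<in>A. (\<forall>j. j \<notin> J \<longrightarrow> \<alpha> j = 0) \<and> sum \<alpha> J \<le> N"
  shows "(\<forall>j. j \<notin> J \<longrightarrow> \<beta> j = 0) \<and> sum \<beta> J + 1 \<le> N"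
proof -
  obtain \<alpha> where \<alpha>: "\<alpha> \<in> A" "\<alpha> e \<noteq> 0" "\<beta> = \<alpha>(e := \<alpha> e - 1)"
    using assms(1) by (auto simp: pderiv_supp_def)
  have "sum \<alpha> J = \<alpha> e + sum \<alpha> (J - {e})" "sum \<beta> J = \<beta> e + sum \<beta> (J - {e})"
    using assms(2,3) by (simp_all add: sum.remove)
  moreover have "sum \<beta> (J - {e}) = sum \<alpha> (J - {e})"
    using \<alpha> by (intro sum.cong) auto
  ultimately have "sum \<beta> J < sum \<alpha> J"
    using \<alpha> by simp
  moreover have "sum \<alpha> J \<le> N" "\<forall>j. j \<notin> J \<longrightarrow> \<beta> j = 0"
    using assms(2,4) \<alpha> by auto
  ultimately show ?thesis
    by simp
qed

lemma rat_poly_coeffs_eq_zero_if_pderivs: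
  assumes A: "finite A" and supp: "\<forall>\<alpha>\<in>A. \<forall>j. j \<notin> J \<longrightarrow> \<alpha> j = 0"
    and pd: "\<And>e \<beta>. e \<in> J \<Longrightarrow> \<beta> \<in> pderiv_supp e A \<Longrightarrow> pderiv_coeff e c \<beta> = 0"
    and P: "rat_poly J A c y = 0"
  shows "\<forall>\<alpha>\<in>A. c \<alpha> = 0"
proof -
  have const: "\<alpha> = (\<lambda>_. 0)" if "\<alpha> \<in> A" "c \<alpha> \<noteq> 0" for \<alpha>
  proof
    fix e
    show "\<alpha> e = 0"
    proof (cases "e \<in> J")
      case True
      show ?thesis
      proof (rule ccontr)
        assume "\<alpha> e \<noteq> 0"
        then have "\<alpha>(e := \<alpha> e - 1) \<in> pderiv_supp e A"
          using that(1) by (auto simp: pderiv_supp_def)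
        with pd True have "pderiv_coeff e c (\<alpha>(e := \<alpha> e - 1)) = 0" by blast
        with \<open>\<alpha> e \<noteq> 0\<close> have "c \<alpha> = 0"
          by (simp add: pderiv_coeff_def fun_upd_idem)
        with that(2) show False ..
      qed
    qed (use supp that in auto)
  qed
  show ?thesis
  proof (rule ccontr)
    assume "\<not> (\<forall>\<alpha>\<in>A. c \<alpha> = 0)"
    then obtain \<alpha> where \<alpha>: "\<alpha> \<in> A" "c \<alpha> \<noteq> 0" by blast
    then have "\<alpha> = (\<lambda>_. 0)" by (rule const)
    with \<alpha> have 0: "(\<lambda>_. 0) \<in> A" "c (\<lambda>_. 0) \<noteq> 0" by simp_all
    have "rat_poly J A c y = (\<Sum>\<alpha>\<in>{\<lambda>_. 0}. of_rat (c \<alpha>) * monomial J \<alpha> y)"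
      unfolding rat_poly_def
    proof (rule sum.mono_neutral_right[OF A])
      show "{\<lambda>_. 0} \<subseteq> A" using 0 by simp
      show "\<forall>\<beta>\<in>A - {\<lambda>_. 0}. of_rat (c \<beta>) * monomial J \<beta> y = 0"
      proof
        fix \<beta> assume "\<beta> \<in> A - {\<lambda>_. 0}"
        then have "c \<beta> = 0" using const by blast
        then show "of_rat (c \<beta>) * monomial J \<beta> y = 0" by simp
      qed
    qed
    also have "\<dots> = of_rat (c (\<lambda>_. 0))"
      by (simp add: monomial_def)
    finally show False
      using P 0(2) by simp
  qed
qed

lemma independent_rows_alg_indep_lengths:
  fixes x0 :: "'v::finite \<Rightarrow> real \<times> real"
  assumes gen: "generic x0" and loop: "\<forall>e\<in>J. fst e \<noteq> snd e"
    and ind: "independent ((\<lambda>e. rigidity_row x0 (fst e) (snd e)) ` J)"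
    and inj: "inj_on (\<lambda>e. rigidity_row x0 (fst e) (snd e)) J"
  shows "alg_indep_lengths J x0"
proof -
  have degree_bounded: "\<forall>A c. finite A \<longrightarrow> (\<forall>\<alpha>\<in>A. (\<forall>j. j \<notin> J \<longrightarrow> \<alpha> j = 0) \<and> sum \<alpha> J \<le> N) \<longrightarrow>
      rat_poly J A c (sq_length x0) = 0 \<longrightarrow> (\<forall>\<alpha>\<in>A. c \<alpha> = 0)" for N
  proof (induction N rule: less_induct)
    case (less N)
    show ?case
    proof (intro allI impI)
      fix A c
      assume A: "finite A" and deg: "\<forall>\<alpha>\<in>A. (\<forall>j. j \<notin> J \<longrightarrow> \<alpha> j = 0) \<and> sum \<alpha> J \<le> N"
        and P: "rat_poly J A c (sq_length x0) = 0"
      have pd: "pderiv_coeff e c \<beta> = 0" if e: "e \<in> J" and \<beta>: "\<beta> \<in> pderiv_supp e A" for e \<beta>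
      proof -
        have deg': "(\<forall>j. j \<notin> J \<longrightarrow> \<beta>' j = 0) \<and> sum \<beta>' J + 1 \<le> N"
          if "\<beta>' \<in> pderiv_supp e A" for \<beta>'
          by (rule pderiv_supp_degree[OF that e _ deg]) simp
        then have "N - 1 < N"
          using \<beta> by fastforce
        then have IH: "\<forall>A c. finite A \<longrightarrow>
            (\<forall>\<alpha>\<in>A. (\<forall>j. j \<notin> J \<longrightarrow> \<alpha> j = 0) \<and> sum \<alpha> J \<le> N - 1) \<longrightarrow>
            rat_poly J A c (sq_length x0) = 0 \<longrightarrow> (\<forall>\<alpha>\<in>A. c \<alpha> = 0)"
          by (rule less)
        have "finite (pderiv_supp e A)"
          using A by (simp add: pderiv_supp_def)
        moreover have "\<forall>\<beta>'\<in>pderiv_supp e A. (\<forall>j. j \<notin> J \<longrightarrow> \<beta>' j = 0) \<and> sum \<beta>' J \<le> N - 1"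
          using deg' by fastforce
        moreover have "rat_poly J (pderiv_supp e A) (pderiv_coeff e c) (sq_length x0) = 0"
          by (rule generic_rat_poly_pderiv_eq_zero[OF gen loop ind inj A P e])
        ultimately show ?thesis
          using IH[rule_format, of "pderiv_supp e A" "pderiv_coeff e c"] \<beta> by simp
      qed
      show "\<forall>\<alpha>\<in>A. c \<alpha> = 0"
        by (rule rat_poly_coeffs_eq_zero_if_pderivs[OF A _ pd P]) (use deg in simp)
    qed
  qed
  show ?thesis
    unfolding alg_indep_lengths_def
  proof (intro allI impI)
    fix A c
    assume "finite A" "\<forall>\<alpha>\<in>A. \<forall>j. j \<notin> J \<longrightarrow> \<alpha> j = 0" "rat_poly J A c (sq_length x0) = 0"
    moreover have "\<forall>\<alpha>\<in>A. sum \<alpha> J \<le> (\<Sum>\<beta>\<in>A. sum \<beta> J)"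
      using \<open>finite A\<close> by (intro ballI member_le_sum) auto
    ultimately show "\<forall>\<alpha>\<in>A. c \<alpha> = 0"
      using degree_bounded[of "\<Sum>\<beta>\<in>A. sum \<beta> J", rule_format] by simp
  qed
qed

lemma of_real_of_rat: "of_real (of_rat r :: real) = (of_rat r :: 'a::{real_field, field_char_0})"
  by (cases r) (simp add: of_rat_rat of_real_divide)

lemma rat_poly_of_real:
  fixes y :: "'j \<Rightarrow> real"
  shows "(rat_poly J A c (\<lambda>j. of_real (y j)) :: 'a::{real_field, field_char_0}) =
    of_real (rat_poly J A c y)"
  by (simp add: rat_poly_def monomial_def of_real_of_rat)

lemma generic_alg_indep_lengths:
  fixes p :: "'v::finite \<Rightarrow> complex \<times> complex" and x0 :: "'v \<Rightarrow> real \<times> real"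
  assumes gen: "generic p" and x0: "alg_indep_lengths J x0"
  shows "alg_indep_lengths J p"
  unfolding alg_indep_lengths_def
proof (intro allI impI)
  fix A c
  assume A: "finite A" "\<forall>\<alpha>\<in>A. \<forall>j. j \<notin> J \<longrightarrow> \<alpha> j = 0" and P: "rat_poly J A c (sq_length p) = 0"
  define x where "x = (\<lambda>v. (complex_of_real (fst (x0 v)), complex_of_real (snd (x0 v))))"
  have "sq_length x = (\<lambda>e. of_real (sq_length x0 e))"
    by (simp add: fun_eq_iff x_def sq_length_def dsq_def)
  then have "of_real (rat_poly J A c (sq_length x0)) = rat_poly J A c (sq_length x)"
    by (simp add: rat_poly_of_real)
  also have "\<dots> = 0"
    by (rule generic_rat_poly_sq_length[OF gen P])
  finally show "\<forall>\<alpha>\<in>A. c \<alpha> = 0"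
    using x0 A unfolding alg_indep_lengths_def by simp
qed

lemma rigid_obtains_alg_indep_lengths:
  fixes E :: "('v::finite \<times> 'v) set" and p :: "'v \<Rightarrow> complex \<times> complex"
  assumes rig: "rigid E" and loopless: "\<forall>(u, v) \<in> E. u \<noteq> v" and gen: "generic p"
  obtains J where "J \<subseteq> E" "card J = 2 * CARD('v) - 3" "alg_indep_lengths J p"
proof -
  obtain x0 :: "'v \<Rightarrow> real \<times> real" where x0: "generic x0" "rigidity_rank E x0 = 2 * CARD('v) - 3"
    using rig unfolding rigid_def by blast
  define row where "row = (\<lambda>e. rigidity_row x0 (fst e) (snd e))"
  obtain B where B: "B \<subseteq> row ` E" "independent B" "card B = dim (row ` E)"
    by (rule real_vector.basis_exists[of "row ` E"])
  obtain J where J: "J \<subseteq> E" "inj_on row J" "B = row ` J"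
    using B(1) unfolding subset_image_inj by blast
  have "card J = card B"
    using card_image[OF J(2)] J(3) by simp
  also have "\<dots> = 2 * CARD('v) - 3"
    using B(3) x0(2) by (simp add: rigidity_rank_def row_def case_prod_beta)
  finally have card: "card J = 2 * CARD('v) - 3" .
  have "alg_indep_lengths J x0"
    using J B(2) loopless by (intro independent_rows_alg_indep_lengths[OF x0(1)]) (auto simp: row_def)
  then show ?thesis
    by (rule that[OF J(1) card generic_alg_indep_lengths[OF gen]])
qed

lemma alg_indep_lengths_param_card:
  fixes q :: "'v \<Rightarrow> 'a::field_char_0 \<times> 'a" and g :: "'v \<times> 'v \<Rightarrow> ('i \<Rightarrow> 'a) \<Rightarrow> 'a"
  assumes indep: "alg_indep_lengths J q" and J: "finite J" and T: "finite T"
    and g: "\<And>e. e \<in> J \<Longrightarrow> g e \<in> poly_funs T d" and t: "\<And>e. e \<in> J \<Longrightarrow> g e t = sq_length q e"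
  shows "card J \<le> card T"
proof (rule ccontr)
  assume "\<not> card J \<le> card T"
  then have "card T < card J" by simp
  then show False
  proof (rule poly_funs_alg_dependent[where g = g, OF T J _ g])
    fix A c
    assume A: "finite A" "\<forall>\<alpha>\<in>A. \<forall>j. j \<notin> J \<longrightarrow> \<alpha> j = 0" "\<exists>\<alpha>\<in>A. c \<alpha> \<noteq> 0"
      and rel: "\<And>z. rat_poly J A c (\<lambda>j. g j z) = 0"
    have "rat_poly J A c (sq_length q) = 0"
      using rel[of t] rat_poly_cong[of J "\<lambda>j. g j t" "sq_length q"] t by simp
    then show False
      using indep A unfolding alg_indep_lengths_def by blast
  qed
qed

section \<open>Isotropic coordinates\<close>

definition iso_u :: "complex \<times> complex \<Rightarrow> complex" where
  "iso_u P = fst P + \<i> * snd P"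

definition iso_w :: "complex \<times> complex \<Rightarrow> complex" where
  "iso_w P = fst P - \<i> * snd P"

definition of_iso :: "complex \<Rightarrow> complex \<Rightarrow> complex \<times> complex" where
  "of_iso U W = ((U + W) / 2, (U - W) / (2 * \<i>))"

lemma dsq_iso: "dsq P Q = (iso_u P - iso_u Q) * (iso_w P - iso_w Q)"
  by (simp add: dsq_def iso_u_def iso_w_def algebra_simps power2_eq_square)

lemma iso_u_of_iso [simp]: "iso_u (of_iso U W) = U"
  by (simp add: iso_u_def of_iso_def field_simps)

lemma iso_w_of_iso [simp]: "iso_w (of_iso U W) = W"
  by (simp add: iso_w_def of_iso_def field_simps)

lemma of_iso_iso: "of_iso (iso_u P) (iso_w P) = P"
  by (cases P) (simp add: iso_u_def iso_w_def of_iso_def field_simps)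

lemma iso_u_diff [simp]: "iso_u (P - Q) = iso_u P - iso_u Q"
  by (simp add: iso_u_def algebra_simps)

lemma iso_w_diff [simp]: "iso_w (P - Q) = iso_w P - iso_w Q"
  by (simp add: iso_w_def algebra_simps)

lemma iso_u_zero [simp]: "iso_u 0 = 0" and iso_w_zero [simp]: "iso_w 0 = 0"
  by (simp_all add: iso_u_def iso_w_def)

lemma of_iso_zero [simp]: "of_iso 0 0 = 0"
  by (simp add: of_iso_def zero_prod_def)

lemma of_iso_minus: "of_iso (- U) (- W) = - of_iso U W"
  by (simp add: of_iso_def field_simps)

lemma poly_funs_var_or_const:
  assumes "finite I" "P \<Longrightarrow> i \<in> I"
  shows "(\<lambda>z :: 'i \<Rightarrow> 'a::field_char_0. if P then z i else of_rat r) \<in> poly_funs I 1"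
proof (cases P)
  case True
  then show ?thesis
    using poly_funs_var[OF assms] by simp
qed (simp add: poly_funs_const)

text \<open>If two vertices share their \<open>u\<close>-coordinate, a translation followed by the complex rotation
  \<open>(u, w) \<mapsto> (l u, w / l)\<close> moves them to \<open>(0, 0)\<close> and to \<open>(0, 0)\<close> or \<open>(0, 1)\<close>; the squared
  lengths are then polynomials in the \<open>2 (n - 2)\<close> coordinates of the other vertices.\<close>

lemma sq_length_param_coinciding_u:
  fixes u w :: "'v::finite \<Rightarrow> complex" and q :: "'v \<Rightarrow> complex \<times> complex"
  assumes d: "\<And>a b. dsq (q a) (q b) = (u a - u b) * (w a - w b)" and uu: "u v2 = u v1"
  defines "T \<equiv> {a. a \<noteq> v1 \<and> a \<noteq> v2} \<times> (UNIV :: bool set)"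
  obtains t g where "\<forall>e. g e \<in> poly_funs T 2" "\<forall>e. g e t = sq_length q e"
proof -
  define l where "l = (if w v2 = w v1 then 1 else w v2 - w v1)"
  have l0: "l \<noteq> 0" by (simp add: l_def)
  define t where "t = (\<lambda>(a, b). if b then l * (u a - u v1) else (w a - w v1) / l)"
  define U :: "'v \<Rightarrow> ('v \<times> bool \<Rightarrow> complex) \<Rightarrow> complex" where
    "U = (\<lambda>a z. if (a, True) \<in> T then z (a, True) else of_rat 0)"
  define W :: "'v \<Rightarrow> ('v \<times> bool \<Rightarrow> complex) \<Rightarrow> complex" where
    "W = (\<lambda>a z. if (a, False) \<in> T then z (a, False)
                else of_rat (if a = v2 \<and> w v2 \<noteq> w v1 then 1 else 0))"
  have U_t: "U a t = l * (u a - u v1)" for a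
    using uu by (auto simp: U_def t_def T_def)
  have W_t: "W a t = (w a - w v1) / l" for a
    using l0 by (auto simp: W_def t_def T_def l_def)
  have T: "finite T" by simp
  have U: "U a \<in> poly_funs T 1" for a
    unfolding U_def by (rule poly_funs_var_or_const[OF T])
  have W: "W a \<in> poly_funs T 1" for a
    unfolding W_def by (rule poly_funs_var_or_const[OF T])
  define g where "g = (\<lambda>e. (U (fst e) - U (snd e)) * (W (fst e) - W (snd e)))"
  show ?thesis
  proof (rule that; intro allI)
    fix e
    have "g e \<in> poly_funs T (1 + 1)"
      unfolding g_def by (intro poly_funs_mult poly_funs_diff U W)
    then show "g e \<in> poly_funs T 2"
      by (simp only: one_add_one)
    have "g e t = (U (fst e) t - U (snd e) t) * (W (fst e) t - W (snd e) t)"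
      by (simp add: g_def)
    also have "\<dots> = (l * (u (fst e) - u v1) - l * (u (snd e) - u v1))
        * ((w (fst e) - w v1) / l - (w (snd e) - w v1) / l)"
      by (simp only: U_t W_t)
    also have "\<dots> = (l * (u (fst e) - u (snd e))) * ((w (fst e) - w (snd e)) / l)"
      by (simp add: right_diff_distrib diff_divide_distrib)
    also have "\<dots> = (u (fst e) - u (snd e)) * (w (fst e) - w (snd e))"
      using l0 by simp
    finally show "g e t = sq_length q e"
      by (simp add: sq_length_def d)
  qed
qed

text \<open>If all vertices lie on the line through \<open>q v1\<close> and \<open>q v2\<close>, each squared length is
  \<open>(u v2 - u v1) (w v2 - w v1)\<close> times the square of a difference of affine parameters: a
  polynomial in \<open>n - 1\<close> values.\<close>

lemma sq_length_param_collinear: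
  fixes u w :: "'v::finite \<Rightarrow> complex" and q :: "'v \<Rightarrow> complex \<times> complex"
  assumes d: "\<And>a b. dsq (q a) (q b) = (u a - u b) * (w a - w b)" and du: "u v2 \<noteq> u v1"
    and col: "\<And>c. (u c - u v1) * (w v2 - w v1) = (u v2 - u v1) * (w c - w v1)"
  defines "T \<equiv> insert (v1, True) ((\<lambda>a. (a, True)) ` {a. a \<noteq> v1 \<and> a \<noteq> v2})"
  obtains t g where "\<forall>e. g e \<in> poly_funs T 3" "\<forall>e. g e t = sq_length q e"
proof -
  define mu where "mu = (\<lambda>a. (u a - u v1) / (u v2 - u v1))"
  have mu_u: "u a - u b = (mu a - mu b) * (u v2 - u v1)" for a b
  proof -
    have "mu a - mu b = ((u a - u v1) - (u b - u v1)) / (u v2 - u v1)"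
      unfolding mu_def by (rule diff_divide_distrib[symmetric])
    then show ?thesis
      using du by simp
  qed
  have w_mu: "w a - w v1 = mu a * (w v2 - w v1)" for a
    using col[of a] du by (simp add: mu_def field_simps)
  have mu_w: "w a - w b = (mu a - mu b) * (w v2 - w v1)" for a b
  proof -
    have "(mu a - mu b) * (w v2 - w v1) = (w a - w v1) - (w b - w v1)"
      by (simp only: left_diff_distrib w_mu[of a] w_mu[of b])
    then show ?thesis by simp
  qed
  define t where "t = (\<lambda>(a :: 'v, b :: bool). if a = v1 then (u v2 - u v1) * (w v2 - w v1) else mu a)"
  define M :: "'v \<Rightarrow> ('v \<times> bool \<Rightarrow> complex) \<Rightarrow> complex" where
    "M = (\<lambda>a z. if a \<noteq> v1 \<and> a \<noteq> v2 then z (a, True) else of_rat (if a = v2 then 1 else 0))"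
  have M_t: "M a t = mu a" for a
    using du by (auto simp: M_def t_def mu_def)
  have T: "finite T" by simp
  have M: "M a \<in> poly_funs T 1" for a
    unfolding M_def by (rule poly_funs_var_or_const[OF T]) (simp add: T_def)
  have v1: "(\<lambda>z. z (v1, True)) \<in> poly_funs T 1"
    by (rule poly_funs_var[OF T]) (simp add: T_def)
  define g where "g = (\<lambda>e. (\<lambda>z. z (v1, True)) * ((M (fst e) - M (snd e)) * (M (fst e) - M (snd e))))"
  show ?thesis
  proof (rule that; intro allI)
    fix e
    have "g e \<in> poly_funs T (1 + (1 + 1))"
      unfolding g_def by (intro poly_funs_mult poly_funs_diff M v1)
    then show "g e \<in> poly_funs T 3"
      by (simp add: numeral_3_eq_3)
    have "g e t = t (v1, True) * ((M (fst e) t - M (snd e) t) * (M (fst e) t - M (snd e) t))"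
      by (simp add: g_def)
    also have "\<dots> = ((u v2 - u v1) * (w v2 - w v1)) * ((mu (fst e) - mu (snd e)) * (mu (fst e) - mu (snd e)))"
      by (simp only: M_t) (simp add: t_def)
    also have "\<dots> = ((mu (fst e) - mu (snd e)) * (u v2 - u v1)) * ((mu (fst e) - mu (snd e)) * (w v2 - w v1))"
      by (simp only: mult_ac)
    also have "\<dots> = (u (fst e) - u (snd e)) * (w (fst e) - w (snd e))"
      by (simp only: mu_u[symmetric] mu_w[symmetric])
    finally show "g e t = sq_length q e"
      by (simp add: sq_length_def d)
  qed
qed

lemma card_other_vertices:
  "v1 \<noteq> v2 \<Longrightarrow> card {a :: 'v::finite. a \<noteq> v1 \<and> a \<noteq> v2} = CARD('v) - 2"
proof -
  have "{a :: 'v. a \<noteq> v1 \<and> a \<noteq> v2} = UNIV - {v1, v2}" by auto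
  then show "v1 \<noteq> v2 \<Longrightarrow> ?thesis" by (simp add: card_Diff_subset)
qed

lemma alg_indep_lengths_coords_differ:
  fixes q :: "'v::finite \<Rightarrow> complex \<times> complex" and u w :: "'v \<Rightarrow> complex"
  assumes indep: "alg_indep_lengths J q" and card_J: "card J = 2 * CARD('v) - 3"
    and v12: "v1 \<noteq> v2" and d: "\<And>a b. dsq (q a) (q b) = (u a - u b) * (w a - w b)"
  shows "u v2 \<noteq> u v1"
proof
  define V where "V = {a. a \<noteq> v1 \<and> a \<noteq> v2}"
  assume "u v2 = u v1"
  then obtain t g where g: "\<forall>e. g e \<in> poly_funs (V \<times> (UNIV :: bool set)) 2"
    and t: "\<forall>e. g e t = sq_length q e"
    unfolding V_def by (rule sq_length_param_coinciding_u[where q = q and u = u and w = w, OF d])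
  have "card J \<le> card (V \<times> (UNIV :: bool set))"
    by (rule alg_indep_lengths_param_card[OF indep, where g = g and t = t and d = 2])
      (simp_all add: g t)
  moreover have "card {v1, v2} \<le> CARD('v)"
    by (rule card_mono) simp_all
  ultimately show False
    using card_J v12 card_other_vertices[OF v12] by (simp add: V_def card_cartesian_product)
qed

lemma alg_indep_lengths_not_collinear:
  fixes q :: "'v::finite \<Rightarrow> complex \<times> complex" and u w :: "'v \<Rightarrow> complex"
  assumes indep: "alg_indep_lengths J q" and card_J: "card J = 2 * CARD('v) - 3"
    and n3: "CARD('v) \<ge> 3" and v12: "v1 \<noteq> v2"
    and d: "\<And>a b. dsq (q a) (q b) = (u a - u b) * (w a - w b)" and u12: "u v2 \<noteq> u v1"
  obtains c where "(u c - u v1) * (w v2 - w v1) \<noteq> (u v2 - u v1) * (w c - w v1)"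
proof (rule ccontr)
  define V where "V = {a. a \<noteq> v1 \<and> a \<noteq> v2}"
  assume "\<not> thesis"
  then have "\<And>c. (u c - u v1) * (w v2 - w v1) = (u v2 - u v1) * (w c - w v1)"
    using that by blast
  then obtain t g where g: "\<forall>e. g e \<in> poly_funs (insert (v1, True) ((\<lambda>a. (a, True)) ` V)) 3"
    and t: "\<forall>e. g e t = sq_length q e"
    unfolding V_def by (rule sq_length_param_collinear[where q = q and u = u and w = w, OF d u12])
  have "card J \<le> card (insert (v1, True) ((\<lambda>a. (a, True)) ` V))"
    by (rule alg_indep_lengths_param_card[OF indep, where g = g and t = t and d = 3])
      (simp_all add: g t)
  moreover have "card ((\<lambda>a. (a, True)) ` V) = card V"
    by (rule card_image) (auto intro: inj_onI)
  moreover have "(v1, True) \<notin> (\<lambda>a. (a, True)) ` V"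
    by (auto simp: V_def)
  ultimately show False
    using card_J n3 card_other_vertices[OF v12] by (simp add: V_def)
qed

lemma alg_indep_lengths_nondegenerate:
  fixes q :: "'v::finite \<Rightarrow> complex \<times> complex"
  assumes indep: "alg_indep_lengths J q" and card_J: "card J = 2 * CARD('v) - 3"
    and n3: "CARD('v) \<ge> 3" and v12: "v1 \<noteq> v2"
  obtains c where "iso_u (q v2) \<noteq> iso_u (q v1)" "iso_w (q v2) \<noteq> iso_w (q v1)"
    "(iso_u (q c) - iso_u (q v1)) * (iso_w (q v2) - iso_w (q v1))
       \<noteq> (iso_u (q v2) - iso_u (q v1)) * (iso_w (q c) - iso_w (q v1))"
proof -
  define u where "u = (\<lambda>a. iso_u (q a))"
  define w where "w = (\<lambda>a. iso_w (q a))"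
  have d: "dsq (q a) (q b) = (u a - u b) * (w a - w b)" for a b
    by (simp add: u_def w_def dsq_iso)
  have d': "dsq (q a) (q b) = (w a - w b) * (u a - u b)" for a b
    by (simp add: d mult.commute)
  have u12: "u v2 \<noteq> u v1" and w12: "w v2 \<noteq> w v1"
    by (rule alg_indep_lengths_coords_differ[where q = q, OF indep card_J v12, OF d],
        rule alg_indep_lengths_coords_differ[where q = q, OF indep card_J v12, OF d'])
  obtain c where "(u c - u v1) * (w v2 - w v1) \<noteq> (u v2 - u v1) * (w c - w v1)"
    by (rule alg_indep_lengths_not_collinear[where q = q and u = u and w = w,
          OF indep card_J n3 v12 d u12])
  with u12 w12 that show ?thesis
    by (simp add: u_def w_def)
qed

section \<open>Congruent realisations in isotropic coordinates\<close>

lemma sum_prod_eq_cases: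
  fixes X Y a b :: "'a::idom"
  assumes prod: "X * Y = a * b" and sum: "X + Y = a + b"
  shows "(X = a \<and> Y = b) \<or> (X = b \<and> Y = a)"
proof -
  have "(X - a) * (X - b) = X * X - X * (X + Y) + X * Y"
    using prod sum by (simp add: algebra_simps)
  also have "\<dots> = 0"
    by (simp add: algebra_simps)
  finally have "X = a \<or> X = b" by simp
  then show ?thesis
    using sum by auto
qed

text \<open>In the following lemmas \<open>(U, W)\<close> and \<open>(u, w)\<close> are the isotropic coordinates of two
  congruent realisations, both translated so that \<open>v1\<close> sits at the origin.  Vertex by vertex,
  the first is obtained from the second by a rotation (\<open>U a W v2 = u a w v2\<close>, ...) or by a
  reflection, and a vertex off the line through \<open>v1\<close> and \<open>v2\<close> decides which one for all.\<close>

lemma congruent_iso_vertex_cases: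
  fixes U W u w :: "'v \<Rightarrow> complex"
  assumes cong: "\<And>x y. (U x - U y) * (W x - W y) = (u x - u y) * (w x - w y)"
    and origin: "U v1 = 0" "W v1 = 0" "u v1 = 0" "w v1 = 0"
  shows "(U a * W v2 = u a * w v2 \<and> U v2 * W a = u v2 * w a)
       \<or> (U a * W v2 = u v2 * w a \<and> U v2 * W a = u a * w v2)"
proof -
  have e1: "U a * W a = u a * w a"
    using cong[of a v1] origin by simp
  have e2: "U v2 * W v2 = u v2 * w v2"
    using cong[of v2 v1] origin by simp
  have "(U a * W v2) * (U v2 * W a) = (U a * W a) * (U v2 * W v2)"
    by (simp add: ac_simps)
  also have "\<dots> = (u a * w v2) * (u v2 * w a)"
    by (simp add: e1 e2 ac_simps)
  finally have "(U a * W v2) * (U v2 * W a) = (u a * w v2) * (u v2 * w a)" .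
  moreover have "U a * W v2 + U v2 * W a = u a * w v2 + u v2 * w a"
    using cong[of a v2] e1 e2 by (simp add: algebra_simps)
  ultimately show ?thesis
    by (auto dest: sum_prod_eq_cases)
qed

lemma congruent_iso_proper_spreads:
  fixes U W u w :: "'v \<Rightarrow> complex"
  assumes cong: "\<And>x y. (U x - U y) * (W x - W y) = (u x - u y) * (w x - w y)"
    and origin: "U v1 = 0" "W v1 = 0" "u v1 = 0" "w v1 = 0"
    and proper_c: "U c * W v2 = u c * w v2" "U v2 * W c = u v2 * w c"
    and nd: "u c * w v2 \<noteq> u v2 * w c"
  shows "U a * W v2 = u a * w v2 \<and> U v2 * W a = u v2 * w a"
  using congruent_iso_vertex_cases[where U = U and W = W and u = u and w = w, OF cong origin]
proof
  assume improper: "U a * W v2 = u v2 * w a \<and> U v2 * W a = u a * w v2"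
  have "(u c - u a) * (w c - w a) * (u v2 * w v2) = (U c - U a) * (W c - W a) * (U v2 * W v2)"
    using cong[of c a] cong[of v2 v1] origin by simp
  also have "\<dots> = (U c * W v2 - U a * W v2) * (U v2 * W c - U v2 * W a)"
    by (simp add: algebra_simps)
  also have "\<dots> = (u c * w v2 - u v2 * w a) * (u v2 * w c - u a * w v2)"
    using proper_c improper by simp
  finally have mixed: "(u c - u a) * (w c - w a) * (u v2 * w v2)
      = (u c * w v2 - u v2 * w a) * (u v2 * w c - u a * w v2)" .
  have "(u c * w v2 - u v2 * w c) * (u a * w v2 - u v2 * w a)
      = (u c - u a) * (w c - w a) * (u v2 * w v2) - (u c * w v2 - u v2 * w a) * (u v2 * w c - u a * w v2)"
    by (simp add: algebra_simps)
  with mixed nd have "u a * w v2 = u v2 * w a"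
    by simp
  with improper show ?thesis
    by simp
qed

lemma congruent_iso_proper_rotation:
  fixes U W u w :: "'v \<Rightarrow> complex"
  assumes proper: "\<And>a. U a * W v2 = u a * w v2 \<and> U v2 * W a = u v2 * w a"
    and e2: "U v2 * W v2 = u v2 * w v2" and nz: "u v2 \<noteq> 0" "w v2 \<noteq> 0"
  obtains l where "l \<noteq> 0" "\<And>a. U a = l * u a" "\<And>a. W a = w a / l"
proof
  define l where "l = U v2 / u v2"
  have U2: "U v2 \<noteq> 0" and W2: "W v2 \<noteq> 0"
    using e2 nz by auto
  show "l \<noteq> 0"
    using U2 nz by (simp add: l_def)
  have W2l: "W v2 = w v2 / l"
    using e2 nz U2 by (simp add: l_def field_simps)
  show "U a = l * u a" for a
    using proper[of a] W2l W2 nz by (simp add: field_simps)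
  show "W a = w a / l" for a
    using proper[of a] U2 nz by (simp add: l_def field_simps)
qed

lemma congruent_iso_cases:
  fixes U W u w :: "'v \<Rightarrow> complex"
  assumes cong: "\<And>x y. (U x - U y) * (W x - W y) = (u x - u y) * (w x - w y)"
    and origin: "U v1 = 0" "W v1 = 0" "u v1 = 0" "w v1 = 0"
    and nz: "u v2 \<noteq> 0" "w v2 \<noteq> 0" and nd: "u c * w v2 \<noteq> u v2 * w c"
  obtains (rotation) l where "l \<noteq> 0" "\<And>a. U a = l * u a" "\<And>a. W a = w a / l"
    | (reflection) l where "l \<noteq> 0" "\<And>a. U a = l * w a" "\<And>a. W a = u a / l"
proof -
  have e2: "U v2 * W v2 = u v2 * w v2"
    using cong[of v2 v1] origin by simp
  have cong': "(U x - U y) * (W x - W y) = (w x - w y) * (u x - u y)" for x y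
    using cong[of x y] by (simp add: mult.commute)
  consider (proper) "U c * W v2 = u c * w v2" "U v2 * W c = u v2 * w c"
    | (improper) "U c * W v2 = u v2 * w c" "U v2 * W c = u c * w v2"
    using congruent_iso_vertex_cases[where U = U and W = W and u = u and w = w, OF cong origin]
    by blast
  then show ?thesis
  proof cases
    case proper
    then have "U a * W v2 = u a * w v2 \<and> U v2 * W a = u v2 * w a" for a
      by (rule congruent_iso_proper_spreads[where U = U and W = W and u = u and w = w,
            OF cong origin _ _ nd])
    then show ?thesis
      by (rule congruent_iso_proper_rotation[where U = U and W = W and u = u and w = w, OF _ e2 nz])
        (rule rotation)
  next
    case improper
    then have "U c * W v2 = w c * u v2" "U v2 * W c = w v2 * u c"
      by (simp_all add: mult.commute)
    moreover have "w c * u v2 \<noteq> w v2 * u c"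
      using nd by (simp add: mult.commute)
    ultimately have "U a * W v2 = w a * u v2 \<and> U v2 * W a = w v2 * u a" for a
      by (rule congruent_iso_proper_spreads[where U = U and W = W and u = w and w = u,
            OF cong' origin(1,2,4,3)])
    moreover have "U v2 * W v2 = w v2 * u v2"
      using e2 by (simp add: mult.commute)
    ultimately show ?thesis
      by (rule congruent_iso_proper_rotation[where U = U and W = W and u = w and w = u, OF _ _ nz(2,1)])
        (rule reflection)
  qed
qed

text \<open>In isotropic coordinates the complex rotations about the origin are the maps
  \<open>(u, w) \<mapsto> (l u, w / l)\<close> with \<open>l \<noteq> 0\<close>, and the reflections in lines through the origin are
  the maps \<open>(u, w) \<mapsto> (l w, u / l)\<close>.\<close>

definition rotation :: "complex \<Rightarrow> complex \<times> complex \<Rightarrow> complex \<times> complex" where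
  "rotation l P = of_iso (l * iso_u P) (iso_w P / l)"

definition reflection :: "complex \<Rightarrow> complex \<times> complex \<Rightarrow> complex \<times> complex" where
  "reflection l P = of_iso (l * iso_w P) (iso_u P / l)"

lemma iso_u_rotation [simp]: "iso_u (rotation l P) = l * iso_u P"
  and iso_w_rotation [simp]: "iso_w (rotation l P) = iso_w P / l"
  and iso_u_reflection [simp]: "iso_u (reflection l P) = l * iso_w P"
  and iso_w_reflection [simp]: "iso_w (reflection l P) = iso_u P / l"
  by (simp_all add: rotation_def reflection_def)

lemma dsq_rotation: "l \<noteq> 0 \<Longrightarrow> dsq (rotation l P) (rotation l Q) = dsq P Q"
  and dsq_reflection: "l \<noteq> 0 \<Longrightarrow> dsq (reflection l P) (reflection l Q) = dsq P Q"
  by (simp_all add: dsq_iso field_simps)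

lemma rotation_zero [simp]: "rotation l 0 = 0"
  and reflection_zero [simp]: "reflection l 0 = 0"
  by (simp_all add: rotation_def reflection_def)

lemma rotation_minus: "rotation (- l) P = - rotation l P"
  and reflection_minus: "reflection (- l) P = - reflection l P"
  by (simp_all add: rotation_def reflection_def of_iso_minus[symmetric])

lemma fst_eq_zero_iff_iso: "fst P = 0 \<longleftrightarrow> iso_u P + iso_w P = 0"
  by (simp add: iso_u_def iso_w_def)

lemma rotation_reflection_agree:
  assumes "l \<noteq> 0" "m \<noteq> 0" "rotation l P = reflection m P" "rotation l Q = reflection m Q"
  shows "iso_u P * iso_w Q = iso_u Q * iso_w P"
proof -
  have P: "l * iso_u P = m * iso_w P" and Q: "l * iso_u Q = m * iso_w Q"
    using arg_cong[OF assms(3), of iso_u] arg_cong[OF assms(4), of iso_u] by simp_all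
  have "(l * m) * (iso_u P * iso_w Q) = (l * iso_u P) * (m * iso_w Q)"
    by (simp add: ac_simps)
  also have "\<dots> = (m * iso_w P) * (l * iso_u Q)"
    by (simp only: P Q)
  also have "\<dots> = (l * m) * (iso_u Q * iso_w P)"
    by (simp add: ac_simps)
  finally have "(l * m) * (iso_u P * iso_w Q) = (l * m) * (iso_u Q * iso_w P)" .
  with assms(1,2) show ?thesis
    by simp
qed

lemma Arg_minus_in_upper_half:
  fixes z :: complex
  assumes "z \<noteq> 0"
  shows "Arg (- z) \<in> {0<..pi} \<longleftrightarrow> Arg z \<notin> {0<..pi}"
  using Arg_minus[OF assms] Arg_bounded[of z] by auto

lemma card_sign_split:
  fixes a b :: "'a::ab_group_add"
  assumes Pa: "P (- a) \<longleftrightarrow> \<not> P a" and Pb: "P (- b) \<longleftrightarrow> \<not> P b"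
    and ab: "a \<noteq> b" "a \<noteq> - b"
  shows "card {a, - a, b, - b} = 4" "card {x \<in> {a, - a, b, - b}. P x} = 2"
proof -
  have "a \<noteq> - a" "b \<noteq> - b"
    using Pa Pb by auto
  moreover have "- a \<noteq> b" "- a \<noteq> - b"
    using ab by (auto simp: minus_equation_iff)
  ultimately show "card {a, - a, b, - b} = 4"
    using ab by simp
  define x where "x = (if P a then a else - a)"
  define y where "y = (if P b then b else - b)"
  have "{x \<in> {a, - a, b, - b}. P x} = {x, y}"
    using Pa Pb by (auto simp: x_def y_def)
  moreover have "x \<noteq> y"
    using ab \<open>- a \<noteq> b\<close> \<open>- a \<noteq> - b\<close> by (simp add: x_def y_def)
  ultimately show "card {x \<in> {a, - a, b, - b}. P x} = 2"
    by simp
qed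

lemma dsq_diff_right: "dsq (P - X) (Q - X) = dsq P Q"
  by (simp add: dsq_def)

lemma congruent_rotation_translate: "l \<noteq> 0 \<Longrightarrow> congruent p (\<lambda>a. rotation l (p a - X))"
  and congruent_reflection_translate: "l \<noteq> 0 \<Longrightarrow> congruent p (\<lambda>a. reflection l (p a - X))"
  by (simp_all add: congruent_def dsq_rotation dsq_reflection dsq_diff_right)

lemma fst_rotation_eq_zero_iff:
  "l \<noteq> 0 \<Longrightarrow> iso_u P \<noteq> 0 \<Longrightarrow> fst (rotation l P) = 0 \<longleftrightarrow> l^2 = - iso_w P / iso_u P"
  by (auto simp: fst_eq_zero_iff_iso field_simps power2_eq_square eq_neg_iff_add_eq_0 add.commute)

lemma fst_reflection_eq_zero_iff:
  "l \<noteq> 0 \<Longrightarrow> iso_w P \<noteq> 0 \<Longrightarrow> fst (reflection l P) = 0 \<longleftrightarrow> l^2 = - iso_u P / iso_w P"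
  by (auto simp: fst_eq_zero_iff_iso field_simps power2_eq_square eq_neg_iff_add_eq_0 add.commute)

lemma congruent_rotation_or_reflection:
  fixes p q :: "'v \<Rightarrow> complex \<times> complex" and v1 v2 c :: 'v
  defines "u \<equiv> \<lambda>a. iso_u (p a - p v1)" and "w \<equiv> \<lambda>a. iso_w (p a - p v1)"
  assumes pq: "congruent p q" "q v1 = (0, 0)"
    and du: "u v2 \<noteq> 0" and dw: "w v2 \<noteq> 0" and nd: "u c * w v2 \<noteq> u v2 * w c"
  obtains (rotation) l where "l \<noteq> 0" "q = (\<lambda>a. rotation l (p a - p v1))"
    | (reflection) l where "l \<noteq> 0" "q = (\<lambda>a. reflection l (p a - p v1))"
proof -
  define U where "U = (\<lambda>a. iso_u (q a))"
  define W where "W = (\<lambda>a. iso_w (q a))"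
  have cong: "(U x - U y) * (W x - W y) = (u x - u y) * (w x - w y)" for x y
    using pq(1) by (simp add: congruent_def U_def W_def u_def w_def dsq_iso)
  have origin: "U v1 = 0" "W v1 = 0" "u v1 = 0" "w v1 = 0"
    using pq(2) by (simp_all add: U_def W_def u_def w_def iso_u_def iso_w_def)
  have q_iso: "q a = of_iso (U a) (W a)" for a
    by (simp add: U_def W_def of_iso_iso)
  show ?thesis
  proof (rule congruent_iso_cases[where U = U and W = W and u = u and w = w, OF cong origin du dw nd])
    fix l assume "l \<noteq> 0" "\<And>a. U a = l * u a" "\<And>a. W a = w a / l"
    then show ?thesis
      by (intro rotation[of l]) (simp_all add: fun_eq_iff q_iso rotation_def u_def w_def)
  next
    fix l assume "l \<noteq> 0" "\<And>a. U a = l * w a" "\<And>a. W a = u a / l"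
    then show ?thesis
      by (intro reflection[of l]) (simp_all add: fun_eq_iff q_iso reflection_def u_def w_def)
  qed
qed

lemma normalised_congruent_eq:
  fixes p :: "'v \<Rightarrow> complex \<times> complex" and v1 v2 c :: 'v
  defines "u \<equiv> \<lambda>a. iso_u (p a - p v1)" and "w \<equiv> \<lambda>a. iso_w (p a - p v1)"
  assumes du: "u v2 \<noteq> 0" and dw: "w v2 \<noteq> 0" and nd: "u c * w v2 \<noteq> u v2 * w c"
  defines "R \<equiv> \<lambda>l a. rotation l (p a - p v1)" and "F \<equiv> \<lambda>l a. reflection l (p a - p v1)"
    and "s \<equiv> csqrt (- w v2 / u v2)" and "r \<equiv> csqrt (- u v2 / w v2)"
  shows "{q. congruent p q \<and> q v1 = (0, 0) \<and> fst (q v2) = 0} = {R s, - R s, F r, - F r}"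
    (is "?T = _")
proof -
  have R_mem: "R l \<in> ?T \<longleftrightarrow> l^2 = - w v2 / u v2" if "l \<noteq> 0" for l
    using that du congruent_rotation_translate[OF that, of p "p v1"]
    by (simp add: R_def u_def w_def fst_rotation_eq_zero_iff flip: zero_prod_def)
  have F_mem: "F l \<in> ?T \<longleftrightarrow> l^2 = - u v2 / w v2" if "l \<noteq> 0" for l
    using that dw congruent_reflection_translate[OF that, of p "p v1"]
    by (simp add: F_def u_def w_def fst_reflection_eq_zero_iff flip: zero_prod_def)
  have s: "s \<noteq> 0" "s^2 = - w v2 / u v2" and r: "r \<noteq> 0" "r^2 = - u v2 / w v2"
    using du dw by (simp_all add: s_def r_def)
  have minus: "- R l = R (- l)" "- F l = F (- l)" for l
    by (simp_all add: fun_eq_iff R_def F_def rotation_minus reflection_minus)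
  show ?thesis
  proof (intro equalityI subsetI)
    fix q assume "q \<in> ?T"
    then have q: "congruent p q" "q v1 = (0, 0)" by auto
    show "q \<in> {R s, - R s, F r, - F r}"
      using q(1,2) du dw nd unfolding u_def w_def
    proof (cases rule: congruent_rotation_or_reflection)
      case (rotation l)
      then have "q = R l"
        by (simp add: R_def)
      with \<open>q \<in> ?T\<close> R_mem[OF rotation(1)] s have "l^2 = s^2"
        by simp
      then have "l = s \<or> l = - s"
        by (rule power2_eq_iff[THEN iffD1])
      with \<open>q = R l\<close> show ?thesis
        by (auto simp: minus)
    next
      case (reflection l)
      then have "q = F l"
        by (simp add: F_def)
      with \<open>q \<in> ?T\<close> F_mem[OF reflection(1)] r have "l^2 = r^2"
        by simp
      then have "l = r \<or> l = - r"
        by (rule power2_eq_iff[THEN iffD1])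
      with \<open>q = F l\<close> show ?thesis
        by (auto simp: minus)
    qed
  next
    fix q assume "q \<in> {R s, - R s, F r, - F r}"
    then show "q \<in> ?T"
      using R_mem[of s] R_mem[of "- s"] F_mem[of r] F_mem[of "- r"] s r by (auto simp: minus)
  qed
qed

lemma normalised_snd_neq_zero:
  assumes "congruent p q" "q v1 = (0, 0)" "fst (q v2) = 0" "dsq (p v2) (p v1) \<noteq> 0"
  shows "snd (q v2) \<noteq> 0"
proof
  assume "snd (q v2) = 0"
  with assms(2,3) have "q v2 = q v1"
    by (simp add: prod_eq_iff)
  with assms(1,4) show False
    by (simp add: congruent_def dsq_def)
qed

lemma card_normalised_congruent:
  fixes p :: "'v \<Rightarrow> complex \<times> complex"
  assumes du: "iso_u (p v2) \<noteq> iso_u (p v1)" and dw: "iso_w (p v2) \<noteq> iso_w (p v1)"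
    and nd: "(iso_u (p c) - iso_u (p v1)) * (iso_w (p v2) - iso_w (p v1))
       \<noteq> (iso_u (p v2) - iso_u (p v1)) * (iso_w (p c) - iso_w (p v1))"
  defines "T \<equiv> {q. congruent p q \<and> q v1 = (0, 0) \<and> fst (q v2) = 0}"
  shows "card T = 4" "card {q \<in> T. Arg (snd (q v2)) \<in> {0<..pi}} = 2"
proof -
  define R where "R = (\<lambda>l a. rotation l (p a - p v1))"
  define F where "F = (\<lambda>l a. reflection l (p a - p v1))"
  define s where "s = csqrt (- iso_w (p v2 - p v1) / iso_u (p v2 - p v1))"
  define r where "r = csqrt (- iso_u (p v2 - p v1) / iso_w (p v2 - p v1))"
  have T: "T = {R s, - R s, F r, - F r}"
    unfolding T_def R_def F_def s_def r_def
    by (rule normalised_congruent_eq) (use du dw nd in simp_all)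
  have snd_nz: "snd (q v2) \<noteq> 0" if "q \<in> T" for q
    using that du dw by (intro normalised_snd_neq_zero[of p q]) (simp_all add: T_def dsq_iso)
  let ?P = "\<lambda>q. Arg (snd (q v2)) \<in> {0<..pi}"
  have flip: "?P (- q) \<longleftrightarrow> \<not> ?P q" if "q \<in> T" for q
    using Arg_minus_in_upper_half[OF snd_nz[OF that]] by simp
  have s0: "s \<noteq> 0" and r0: "r \<noteq> 0"
    using du dw by (simp_all add: s_def r_def)
  have R_ne_F: "R s \<noteq> F m" if "m \<noteq> 0" for m
  proof
    assume "R s = F m"
    then have "rotation s (p v2 - p v1) = reflection m (p v2 - p v1)"
      "rotation s (p c - p v1) = reflection m (p c - p v1)"
      by (simp_all add: R_def F_def fun_eq_iff)
    from rotation_reflection_agree[OF s0 that this] nd show False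
      by (simp add: mult.commute)
  qed
  have "- F r = F (- r)"
    by (simp add: fun_eq_iff F_def reflection_minus)
  then have "R s \<noteq> F r" "R s \<noteq> - F r"
    using R_ne_F r0 by simp_all
  moreover have "?P (- R s) \<longleftrightarrow> \<not> ?P (R s)" "?P (- F r) \<longleftrightarrow> \<not> ?P (F r)"
    by (rule flip, simp add: T)+
  ultimately have "card {R s, - R s, F r, - F r} = 4"
    "card {q \<in> {R s, - R s, F r, - F r}. ?P q} = 2"
    using card_sign_split[where P = ?P] by blast+
  then show "card T = 4" "card {q \<in> T. ?P q} = 2"
    by (simp_all only: T)
qed

theorem corollary5p3:
  fixes E :: "('v::finite \<times> 'v) set"
    and p :: "'v \<Rightarrow> complex \<times> complex"
    and v1 v2 :: 'v
  assumes loopless: "\<forall>(u, v) \<in> E. u \<noteq> v"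
    and card: "CARD('v) \<ge> 3"
    and v12: "v1 \<noteq> v2"
    and rig: "rigid E"
    and gen: "generic p"
  defines "S \<equiv> {q. equivalent E p q}"
  shows "\<forall>q0 \<in> S.
           card {q \<in> S. congruent q0 q \<and> q v1 = (0, 0) \<and> fst (q v2) = 0} = 4
         \<and> card {q \<in> S. congruent q0 q \<and> q v1 = (0, 0) \<and> fst (q v2) = 0
                  \<and> Arg (snd (q v2)) \<in> {0<..pi}} = 2"
proof
  fix q0 assume "q0 \<in> S"
  then have eqv: "equivalent E p q0"
    by (simp add: S_def)
  obtain J where J: "J \<subseteq> E" "card J = 2 * CARD('v) - 3" "alg_indep_lengths J p"
    by (rule rigid_obtains_alg_indep_lengths[OF rig loopless gen])
  have "sq_length q0 e = sq_length p e" if "e \<in> J" for e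
    using eqv J(1) that by (cases e) (force simp: equivalent_def sq_length_def)
  then have "alg_indep_lengths J q0"
    by (rule alg_indep_lengths_cong[OF J(3)])
  then obtain c where nondeg:
    "iso_u (q0 v2) \<noteq> iso_u (q0 v1)" "iso_w (q0 v2) \<noteq> iso_w (q0 v1)"
    "(iso_u (q0 c) - iso_u (q0 v1)) * (iso_w (q0 v2) - iso_w (q0 v1))
       \<noteq> (iso_u (q0 v2) - iso_u (q0 v1)) * (iso_w (q0 c) - iso_w (q0 v1))"
    by (rule alg_indep_lengths_nondegenerate[OF _ J(2) card v12])
  have S_free: "{q \<in> S. congruent q0 q \<and> Q q} = {q. congruent q0 q \<and> Q q}" for Q
    using eqv by (auto simp: S_def equivalent_def congruent_def)
  show "card {q \<in> S. congruent q0 q \<and> q v1 = (0, 0) \<and> fst (q v2) = 0} = 4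
      \<and> card {q \<in> S. congruent q0 q \<and> q v1 = (0, 0) \<and> fst (q v2) = 0
               \<and> Arg (snd (q v2)) \<in> {0<..pi}} = 2"
    using card_normalised_congruent[where p = q0, OF nondeg] by (simp add: S_free)
qed

end
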